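(* Let $(G,w)$ be a finite connected positively weighted graph whose minimum degree is at least $2$. Then for every natural number $r\ge 1$ and every function $g\colon V(G)\to\mathbb{R}^+$, there exists a vertex $v$ of $G$ such that $$\lambda_1(\widetilde{G}(v,r),w)\ \ge\ \frac{2\sum_{v_1\in V(G)}\sqrt{d(v_1)-1}\sum_{v_2\in N(v_1)} w(v_1v_2)\sqrt{g(v_1)g(v_2)}}{\sum_{u\in V(G)} g(u)d(u)}\cos\left(\frac{\pi}{r+2}\right),$$ where $N(v_1)=\{u\in V(G): v_1u\in E(G)\}$.
   Context: A (positively) weighted graph $(G,w)$ is a simple graph $G$ with a weight function $w\colon E(G)\to\mathbb{R}^+$. $d(u)$ denotes the degree (number of incident edges) of $u$ in $G$. A non-backtracking walk is a walk $(v_0,v_1,\dots)$ with $v_i\neq v_{i+2}$ for all $i$ (walks of length at most $1$ are non-backtracking). The unraveled ball $\widetilde{G}(v,r)$ is the graph whose vertices are all non-backtracking walks in $G$ of length at most $r$ starting at $v$, two walks being adjacent iff one is a one-step extension of the other; it is given the lifted weight $w\big((v_0,\dots,v_{i-1})(v_0,\dots,v_{i-1},v_i)\big)=w(v_{i-1}v_i)$. (Equivalently, it is the ball of radius $r$ about $v$ in the universal cover of $G$.) For a weighted graph $(H,w)$, its adjacency matrix $A(H,w)$ has $(u,v)$-entry $w(uv)$ if $uv\in E(H)$ and $0$ otherwise, and $\lambda_1(H,w)$ denotes the spectral radius of $A(H,w)$ (the weighted spectral radius). *)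

theory Defs
  imports Complex_Main
begin

definition weighted_graph :: "'a set \<Rightarrow> ('a \<Rightarrow> 'a \<Rightarrow> bool) \<Rightarrow> ('a \<Rightarrow> 'a \<Rightarrow> real) \<Rightarrow> bool" where
  "weighted_graph V E w \<longleftrightarrow> finite V
     \<and> (\<forall>u v. E u v \<longrightarrow> u \<in> V \<and> v \<in> V)
     \<and> (\<forall>u v. E u v \<longrightarrow> E v u)
     \<and> (\<forall>u. \<not> E u u)
     \<and> (\<forall>u v. E u v \<longrightarrow> w u v > 0 \<and> w u v = w v u)"

definition connected_graph :: "'a set \<Rightarrow> ('a \<Rightarrow> 'a \<Rightarrow> bool) \<Rightarrow> bool" where
  "connected_graph V E \<longleftrightarrow> V \<noteq> {} \<and> (\<forall>u\<in>V. \<forall>v\<in>V. E\<^sup>*\<^sup>* u v)"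

definition nbhd :: "'a set \<Rightarrow> ('a \<Rightarrow> 'a \<Rightarrow> bool) \<Rightarrow> 'a \<Rightarrow> 'a set" where
  "nbhd V E u = {v \<in> V. E u v}"

definition deg :: "'a set \<Rightarrow> ('a \<Rightarrow> 'a \<Rightarrow> bool) \<Rightarrow> 'a \<Rightarrow> nat" where
  "deg V E u = card (nbhd V E u)"

definition nb_walk :: "('a \<Rightarrow> 'a \<Rightarrow> bool) \<Rightarrow> 'a list \<Rightarrow> bool" where
  "nb_walk E xs \<longleftrightarrow> xs \<noteq> []
     \<and> (\<forall>i. Suc i < length xs \<longrightarrow> E (xs ! i) (xs ! Suc i))
     \<and> (\<forall>i. i + 2 < length xs \<longrightarrow> xs ! i \<noteq> xs ! (i + 2))"

text \<open>Vertices of the unraveled ball: non-backtracking walks from v of length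
(number of edges) at most r.\<close>
definition unr_verts :: "('a \<Rightarrow> 'a \<Rightarrow> bool) \<Rightarrow> 'a \<Rightarrow> nat \<Rightarrow> 'a list set" where
  "unr_verts E v r = {xs. nb_walk E xs \<and> hd xs = v \<and> length xs \<le> r + 1}"

text \<open>Lifted weighted adjacency of the unraveled ball: two walks are adjacent iff
one is a one-step extension of the other; the weight is that of the last edge.\<close>
definition unr_adj :: "('a \<Rightarrow> 'a \<Rightarrow> real) \<Rightarrow> 'a list \<Rightarrow> 'a list \<Rightarrow> real" where
  "unr_adj w xs ys =
     (if (\<exists>z. ys = xs @ [z]) then w (last xs) (last ys)
      else if (\<exists>z. xs = ys @ [z]) then w (last ys) (last xs)
      else 0)"

definition spec_radius :: "'b set \<Rightarrow> ('b \<Rightarrow> 'b \<Rightarrow> real) \<Rightarrow> real" where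
  "spec_radius S A = Sup {cmod \<mu> | \<mu>. \<exists>x :: 'b \<Rightarrow> complex. (\<exists>u\<in>S. x u \<noteq> 0)
       \<and> (\<forall>u\<in>S. (\<Sum>v\<in>S. complex_of_real (A u v) * x v) = \<mu> * x u)}"

definition lambda1_unr :: "('a \<Rightarrow> 'a \<Rightarrow> bool) \<Rightarrow> ('a \<Rightarrow> 'a \<Rightarrow> real) \<Rightarrow> 'a \<Rightarrow> nat \<Rightarrow> real" where
  "lambda1_unr E w v r = spec_radius (unr_verts E v r) (unr_adj w)"

end

theory Submission
  imports Defs "Jordan_Normal_Form.Spectral_Radius" "HOL-Analysis.Convex"
begin

text \<open>For every root \<open>v\<close>, the Rayleigh quotient of any test vector on the unraveled ball
  \<open>T(v, r)\<close> is a lower bound for \<open>\<lambda>\<^sub>1\<close>.  Take \<open>F(x) = s\<^sub>|\<^sub>x\<^sub>| a(x)\<close> on walks \<open>x\<close> from \<open>v\<close>,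
  where \<open>s\<^sub>j = sin ((j + 1) \<pi> / (r + 2))\<close> is the Perron vector of the path on \<open>r + 1\<close>
  vertices (eigenvalue \<open>2 cos (\<pi> / (r + 2))\<close>) and the amplitude is
  \<open>a(x)\<^sup>2 = g(last x) \<Prod> 1 / (d(u) - 1)\<close>, the product over the interior vertices \<open>u\<close> of \<open>x\<close>
  (and \<open>a(v)\<^sup>2 = g(v) d(v)\<close> at the root).  Summed over all roots, the layers of the balls
  are exactly the non-backtracking walks of a fixed length, and these weights make their
  last directed edge uniformly distributed.  So every layer contributes
  \<open>\<Sum>\<^sub>u g(u) d(u)\<close> to \<open>\<Sum>\<^sub>v \<parallel>F\<parallel>\<^sup>2\<close> and at least the numerator of the bound to
  \<open>\<Sum>\<^sub>v F\<^sup>T A F\<close>, and some root attains the averaged Rayleigh quotient.\<close>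

section \<open>Rayleigh quotients and the spectral radius\<close>

definition eigenvalue_on :: "'b set \<Rightarrow> ('b \<Rightarrow> 'b \<Rightarrow> real) \<Rightarrow> complex \<Rightarrow> bool" where
  "eigenvalue_on S A \<mu> \<longleftrightarrow> (\<exists>x :: 'b \<Rightarrow> complex. (\<exists>u\<in>S. x u \<noteq> 0)
       \<and> (\<forall>u\<in>S. (\<Sum>v\<in>S. complex_of_real (A u v) * x v) = \<mu> * x u))"

definition matvec :: "'b set \<Rightarrow> ('b \<Rightarrow> 'b \<Rightarrow> real) \<Rightarrow> ('b \<Rightarrow> real) \<Rightarrow> 'b \<Rightarrow> real" where
  "matvec S A f u = (\<Sum>v\<in>S. A u v * f v)"

definition dot :: "'b set \<Rightarrow> ('b \<Rightarrow> real) \<Rightarrow> ('b \<Rightarrow> real) \<Rightarrow> real" where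
  "dot S f g = (\<Sum>u\<in>S. f u * g u)"

lemma norm_eigenvalue_on_le:
  assumes S: "finite S" and ev: "eigenvalue_on S A \<mu>"
  shows "cmod \<mu> \<le> (\<Sum>u\<in>S. \<Sum>v\<in>S. \<bar>A u v\<bar>)"
proof -
  obtain x where nz: "\<exists>u\<in>S. x u \<noteq> 0"
    and eq: "\<forall>u\<in>S. (\<Sum>v\<in>S. complex_of_real (A u v) * x v) = \<mu> * x u"
    using ev unfolding eigenvalue_on_def by blast
  obtain u0 where u0: "u0 \<in> S" "\<forall>u\<in>S. cmod (x u) \<le> cmod (x u0)"
    using ex_is_arg_min_if_finite[OF S, of "\<lambda>u. - cmod (x u)"] nz
    unfolding is_arg_min_def by fastforce
  have pos: "cmod (x u0) > 0" using nz u0 by force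
  have "cmod \<mu> * cmod (x u0) = cmod (\<Sum>v\<in>S. complex_of_real (A u0 v) * x v)"
    using eq u0(1) by (simp add: norm_mult)
  also have "\<dots> \<le> (\<Sum>v\<in>S. \<bar>A u0 v\<bar> * cmod (x u0))"
    by (rule order_trans[OF norm_sum sum_mono]) (simp add: norm_mult mult_left_mono u0(2))
  also have "\<dots> = (\<Sum>v\<in>S. \<bar>A u0 v\<bar>) * cmod (x u0)"
    by (simp add: sum_distrib_right)
  finally have "cmod \<mu> \<le> (\<Sum>v\<in>S. \<bar>A u0 v\<bar>)"
    using pos by simp
  also have "\<dots> \<le> (\<Sum>u\<in>S. \<Sum>v\<in>S. \<bar>A u v\<bar>)"
    using u0(1) S by (intro member_le_sum) (auto intro: sum_nonneg)
  finally show ?thesis .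
qed

lemma norm_le_spec_radius:
  assumes "finite S" and "eigenvalue_on S A \<mu>"
  shows "cmod \<mu> \<le> spec_radius S A"
proof -
  have "bdd_above {cmod \<mu> | \<mu>. eigenvalue_on S A \<mu>}"
    using norm_eigenvalue_on_le[OF assms(1)] by (intro bdd_aboveI) auto
  then show ?thesis
    using assms(2) unfolding spec_radius_def eigenvalue_on_def[symmetric]
    by (auto intro: cSup_upper)
qed

locale indexed_matrix =
  fixes S :: "'b set" and A :: "'b \<Rightarrow> 'b \<Rightarrow> real" and e :: "nat \<Rightarrow> 'b" and n :: nat
  assumes bij: "bij_betw e {0..<n} S"
begin

definition M :: "complex mat" where
  "M = mat n n (\<lambda>(i,j). complex_of_real (A (e i) (e j)))"

definition vec_of :: "('b \<Rightarrow> real) \<Rightarrow> complex vec" where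
  "vec_of f = vec n (\<lambda>i. complex_of_real (f (e i)))"

lemma M_carrier: "M \<in> carrier_mat n n"
  unfolding M_def by simp

lemma vec_of_carrier: "vec_of f \<in> carrier_vec n"
  unfolding vec_of_def by simp

lemma sum_reindex: "(\<Sum>v\<in>S. h v) = (\<Sum>j<n. h (e j))"
  using sum.reindex_bij_betw[OF bij, of h] by (simp add: atLeast0LessThan)

lemma M_mult_vec_of: "M *\<^sub>v vec_of f = vec_of (matvec S A f)"
  by (intro eq_vecI)
    (simp_all add: M_def vec_of_def matvec_def scalar_prod_def sum_reindex atLeast0LessThan)

lemma mat_pow_mult_vec_of: "(M ^\<^sub>m k) *\<^sub>v vec_of f = vec_of ((matvec S A ^^ k) f)"
proof (induction k arbitrary: f)
  case 0
  show ?case using vec_of_carrier M_carrier by simp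
next
  case (Suc k)
  have "(M ^\<^sub>m Suc k) *\<^sub>v vec_of f = (M ^\<^sub>m k) *\<^sub>v (M *\<^sub>v vec_of f)"
    by (simp add: assoc_mult_mat_vec[OF pow_carrier_mat[OF M_carrier] M_carrier vec_of_carrier])
  also have "\<dots> = vec_of ((matvec S A ^^ Suc k) f)"
    by (simp add: M_mult_vec_of Suc.IH funpow_Suc_right del: funpow.simps)
  finally show ?case .
qed

lemma eigenvalue_on_if_eigenvalue:
  assumes "eigenvalue M \<mu>"
  shows "eigenvalue_on S A \<mu>"
proof -
  obtain v where v: "v \<in> carrier_vec n" "v \<noteq> 0\<^sub>v n" "M *\<^sub>v v = \<mu> \<cdot>\<^sub>v v"
    using assms M_carrier unfolding eigenvalue_def eigenvector_def by auto
  define x where "x u = v $ the_inv_into {0..<n} e u" for u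
  have x_e: "x (e j) = v $ j" if "j < n" for j
    unfolding x_def using the_inv_into_f_f[OF bij_betw_imp_inj_on[OF bij]] that by simp
  obtain i where i: "i < n" "v $ i \<noteq> 0"
    using v(1,2) by (metis carrier_vecD eq_vecI index_zero_vec)
  have "e i \<in> S" using bij i(1) by (auto simp: bij_betw_def)
  then have "\<exists>u\<in>S. x u \<noteq> 0" using i x_e by metis
  moreover have "(\<Sum>w\<in>S. complex_of_real (A u w) * x w) = \<mu> * x u" if "u \<in> S" for u
  proof -
    obtain i where i: "i < n" "u = e i" using bij \<open>u \<in> S\<close> by (auto simp: bij_betw_def image_iff)
    have "(\<Sum>w\<in>S. complex_of_real (A u w) * x w) = (M *\<^sub>v v) $ i"
      using i v(1) M_carrier x_e
      by (simp add: sum_reindex M_def scalar_prod_def atLeast0LessThan)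
    also have "\<dots> = \<mu> * x u" using v i x_e by simp
    finally show ?thesis .
  qed
  ultimately show ?thesis unfolding eigenvalue_on_def by blast
qed

end

lemma indexed_matrix_exists: "finite S \<Longrightarrow> \<exists>e. indexed_matrix S e (card S)"
  using ex_bij_betw_nat_finite unfolding indexed_matrix_def by blast

lemma eigenvalue_on_exists:
  assumes "finite S" "S \<noteq> {}"
  shows "\<exists>\<mu>. eigenvalue_on S A \<mu>"
proof -
  obtain e where "indexed_matrix S e (card S)" using indexed_matrix_exists[OF assms(1)] by blast
  then interpret indexed_matrix S A e "card S" .
  have "card S > 0" using assms by auto
  from spectrum_non_empty[OF M_carrier this] obtain \<mu> where "eigenvalue M \<mu>"
    unfolding spectrum_def by auto
  then show ?thesis using eigenvalue_on_if_eigenvalue by blast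
qed

lemma bounded_iterates_if_eigenvalues_lt_1:
  assumes fin: "finite S" and small: "\<forall>\<mu>. eigenvalue_on S A \<mu> \<longrightarrow> cmod \<mu> < 1"
  shows "\<exists>C. \<forall>k. \<forall>u\<in>S. \<bar>(matvec S A ^^ k) f u\<bar> \<le> C"
proof (cases "S = {}")
  case False
  obtain e where "indexed_matrix S e (card S)" using indexed_matrix_exists[OF fin] by blast
  then interpret indexed_matrix S A e "card S" .
  have n: "card S > 0" using False fin by auto
  obtain \<mu> where "eigenvalue M \<mu>" "spectral_radius M = cmod \<mu>"
    using spectral_radius_mem_max(1)[OF M_carrier n] unfolding spectrum_def by auto
  then have "spectral_radius M < 1" using eigenvalue_on_if_eigenvalue small by auto
  then obtain C where C: "norm_bound (M ^\<^sub>m k) C" for k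
    using spectral_radius_jnf_norm_bound_less_1_upper_triangular[OF M_carrier] by blast
  show ?thesis
  proof (intro exI allI ballI)
    fix k u assume "u \<in> S"
    then obtain i where i: "i < card S" "u = e i"
      using bij unfolding bij_betw_def by (metis atLeastLessThan_iff imageE)
    have "\<bar>(matvec S A ^^ k) f u\<bar> = cmod (((M ^\<^sub>m k) *\<^sub>v vec_of f) $ i)"
      unfolding mat_pow_mult_vec_of using i by (simp add: vec_of_def)
    also have "\<dots> \<le> (\<Sum>j<card S. cmod ((M ^\<^sub>m k) $$ (i, j)) * \<bar>f (e j)\<bar>)"
      using i M_carrier
      by (simp add: scalar_prod_def vec_of_def atLeast0LessThan norm_mult
          order_trans[OF norm_sum])
    also have "\<dots> \<le> (\<Sum>j<card S. C * \<bar>f (e j)\<bar>)"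
      using C i M_carrier unfolding norm_bound_def
      by (intro sum_mono mult_right_mono) auto
    finally show "\<bar>(matvec S A ^^ k) f u\<bar> \<le> C * (\<Sum>v\<in>S. \<bar>f v\<bar>)"
      by (simp add: sum_reindex sum_distrib_left)
  qed
qed simp

lemma dot_matvec_commute:
  assumes sym: "\<forall>u\<in>S. \<forall>v\<in>S. A u v = A v u"
  shows "dot S (matvec S A f) g = dot S f (matvec S A g)"
proof -
  have "dot S (matvec S A f) g = (\<Sum>u\<in>S. \<Sum>v\<in>S. A u v * f v * g u)"
    by (simp add: dot_def matvec_def sum_distrib_right)
  also have "\<dots> = (\<Sum>v\<in>S. \<Sum>u\<in>S. f v * (A v u * g u))"
    using sym by (subst sum.swap) (intro sum.cong refl, simp add: mult_ac)
  also have "\<dots> = dot S f (matvec S A g)"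
    by (simp add: dot_def matvec_def sum_distrib_left)
  finally show ?thesis .
qed

lemma dot_iterates:
  assumes "\<forall>u\<in>S. \<forall>v\<in>S. A u v = A v u"
  shows "dot S ((matvec S A ^^ j) f) ((matvec S A ^^ k) f) = dot S f ((matvec S A ^^ (j + k)) f)"
proof (induction j arbitrary: k)
  case (Suc j)
  have "dot S ((matvec S A ^^ Suc j) f) ((matvec S A ^^ k) f)
      = dot S ((matvec S A ^^ j) f) ((matvec S A ^^ Suc k) f)"
    using dot_matvec_commute[OF assms] by simp
  then show ?case using Suc.IH[of "Suc k"] by simp
qed simp

text \<open>Power iteration: for symmetric \<open>A\<close>, Cauchy--Schwarz gives
  \<open>(f \<bullet> A\<^sup>n f)\<^sup>2 \<le> (f \<bullet> f) (f \<bullet> A\<^sup>2\<^sup>n f)\<close>.\<close>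

lemma dot_iterate_pow2_ge:
  assumes sym: "\<forall>u\<in>S. \<forall>v\<in>S. A u v = A v u"
    and pos: "dot S f f > 0" and nonneg: "dot S f (matvec S A f) \<ge> 0"
  shows "(dot S f (matvec S A f) / dot S f f) ^ 2 ^ m * dot S f f
           \<le> dot S f ((matvec S A ^^ 2 ^ m) f)"
proof (induction m)
  case 0
  show ?case using pos by simp
next
  case (Suc m)
  define q where "q = dot S f (matvec S A f) / dot S f f"
  define p where "p = dot S f f"
  define F where "F = (matvec S A ^^ 2 ^ m) f"
  have IH: "q ^ 2 ^ m * p \<le> dot S f F"
    using Suc.IH by (simp add: q_def p_def F_def)
  have "0 \<le> q ^ 2 ^ m * p" using pos nonneg by (simp add: q_def p_def)
  then have "(q ^ 2 ^ m * p)\<^sup>2 \<le> (dot S f F)\<^sup>2"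
    using IH by (intro power_mono) auto
  also have "\<dots> \<le> p * dot S F F"
    using Cauchy_Schwarz_ineq_sum[of f F S] by (simp add: dot_def p_def power2_eq_square)
  also have "dot S F F = dot S f ((matvec S A ^^ 2 ^ Suc m) f)"
    unfolding F_def dot_iterates[OF sym] by (simp add: mult_2)
  finally have "(q ^ 2 ^ m * p)\<^sup>2 \<le> p * dot S f ((matvec S A ^^ 2 ^ Suc m) f)" .
  moreover have "(q ^ 2 ^ m * p)\<^sup>2 = p * (q ^ 2 ^ Suc m * p)"
  proof -
    have "q ^ 2 ^ Suc m = (q ^ 2 ^ m)\<^sup>2" by (metis mult.commute power_Suc power_mult)
    then show ?thesis by (simp add: power_mult_distrib power2_eq_square)
  qed
  ultimately show ?case using pos by (simp add: q_def p_def)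
qed

text \<open>If all eigenvalues lay in the open unit disc, the iterates would stay bounded,
  whereas \<open>f \<bullet> A\<^sup>2\<^sup>m f\<close> grows doubly exponentially.\<close>

lemma eigenvalue_ge_1_if_rayleigh_gt_1:
  assumes fin: "finite S" and sym: "\<forall>u\<in>S. \<forall>v\<in>S. A u v = A v u"
    and pos: "dot S f f > 0" and big: "dot S f (matvec S A f) > dot S f f"
  shows "\<exists>\<mu>. eigenvalue_on S A \<mu> \<and> 1 \<le> cmod \<mu>"
proof (rule ccontr)
  assume "\<not> ?thesis"
  then have "\<forall>\<mu>. eigenvalue_on S A \<mu> \<longrightarrow> cmod \<mu> < 1" by auto
  then obtain C where C: "\<forall>k. \<forall>u\<in>S. \<bar>(matvec S A ^^ k) f u\<bar> \<le> C"
    using bounded_iterates_if_eigenvalues_lt_1[OF fin] by blast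
  define K where "K = (\<Sum>u\<in>S. \<bar>f u\<bar>) * C"
  have bounded: "dot S f ((matvec S A ^^ k) f) \<le> K" for k
  proof -
    have "dot S f ((matvec S A ^^ k) f) \<le> (\<Sum>u\<in>S. \<bar>f u\<bar> * C)"
      unfolding dot_def
    proof (intro sum_mono)
      fix u assume "u \<in> S"
      have "f u * (matvec S A ^^ k) f u \<le> \<bar>f u\<bar> * \<bar>(matvec S A ^^ k) f u\<bar>"
        by (metis abs_ge_self abs_mult)
      also have "\<dots> \<le> \<bar>f u\<bar> * C" using C \<open>u \<in> S\<close> by (simp add: mult_left_mono)
      finally show "f u * (matvec S A ^^ k) f u \<le> \<bar>f u\<bar> * C" .
    qed
    then show ?thesis by (simp add: K_def sum_distrib_right)
  qed
  define q where "q = dot S f (matvec S A f) / dot S f f"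
  have q: "q > 1" using big pos by (simp add: q_def)
  obtain m where m: "K / dot S f f < q ^ m" using real_arch_pow[OF q] by blast
  have "K < q ^ m * dot S f f" using m pos by (simp add: divide_less_eq)
  also have "\<dots> \<le> q ^ 2 ^ m * dot S f f"
    using q pos by (intro mult_right_mono power_increasing) (auto intro: less_imp_le)
  also have "\<dots> \<le> dot S f ((matvec S A ^^ 2 ^ m) f)"
    unfolding q_def using dot_iterate_pow2_ge[OF sym pos] big pos by simp
  finally show False using bounded[of "2 ^ m"] by linarith
qed

lemma eigenvalue_on_divide:
  assumes "c \<noteq> 0" and "eigenvalue_on S (\<lambda>u v. A u v / c) \<mu>"
  shows "eigenvalue_on S A (complex_of_real c * \<mu>)"
proof -
  obtain x where "\<exists>u\<in>S. x u \<noteq> 0"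
    and x: "\<forall>u\<in>S. (\<Sum>v\<in>S. complex_of_real (A u v / c) * x v) = \<mu> * x u"
    using assms(2) unfolding eigenvalue_on_def by blast
  moreover have "(\<Sum>v\<in>S. complex_of_real (A u v) * x v) = complex_of_real c * \<mu> * x u"
    if "u \<in> S" for u
  proof -
    have "(\<Sum>v\<in>S. complex_of_real (A u v) * x v)
        = (\<Sum>v\<in>S. complex_of_real c * (complex_of_real (A u v / c) * x v))"
      using assms(1) by (intro sum.cong refl) simp
    also have "\<dots> = complex_of_real c * (\<Sum>v\<in>S. complex_of_real (A u v / c) * x v)"
      by (simp only: sum_distrib_left)
    also have "\<dots> = complex_of_real c * \<mu> * x u"
      using x that by simp
    finally show ?thesis .
  qed
  ultimately show ?thesis unfolding eigenvalue_on_def by blast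
qed

lemma rayleigh_quotient_le_spec_radius:
  assumes fin: "finite S" and sym: "\<forall>u\<in>S. \<forall>v\<in>S. A u v = A v u"
    and pos: "(\<Sum>u\<in>S. (f u)\<^sup>2) > 0"
  shows "(\<Sum>u\<in>S. \<Sum>v\<in>S. f u * A u v * f v) / (\<Sum>u\<in>S. (f u)\<^sup>2) \<le> spec_radius S A"
    (is "?q \<le> _")
proof -
  have pos': "dot S f f > 0" using pos by (simp add: dot_def power2_eq_square)
  have q: "?q = dot S f (matvec S A f) / dot S f f"
    by (simp add: dot_def matvec_def sum_distrib_left power2_eq_square mult.assoc)
  have "S \<noteq> {}" using pos by auto
  then obtain \<mu> where "eigenvalue_on S A \<mu>" using eigenvalue_on_exists[OF fin] by blast
  then have "cmod \<mu> \<le> spec_radius S A" by (rule norm_le_spec_radius[OF fin])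
  then have sr_nonneg: "0 \<le> spec_radius S A" using norm_ge_zero[of \<mu>] by linarith
  have below: "t \<le> spec_radius S A" if t: "0 < t" "t < ?q" for t
  proof -
    have "dot S f (matvec S (\<lambda>u v. A u v / t) f) = dot S f (matvec S A f) / t"
      by (simp add: dot_def matvec_def flip: sum_divide_distrib)
    also have "\<dots> > dot S f f"
      using t pos' unfolding q by (simp add: pos_less_divide_eq mult.commute)
    finally have big: "dot S f (matvec S (\<lambda>u v. A u v / t) f) > dot S f f" .
    have "\<forall>u\<in>S. \<forall>v\<in>S. A u v / t = A v u / t" using sym by simp
    then obtain \<mu> where \<mu>: "eigenvalue_on S (\<lambda>u v. A u v / t) \<mu>" "1 \<le> cmod \<mu>"
      using eigenvalue_ge_1_if_rayleigh_gt_1[OF fin _ pos' big] by blast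
    have "t \<le> t * cmod \<mu>" using \<mu>(2) t(1) by simp
    also have "\<dots> \<le> spec_radius S A"
      using norm_le_spec_radius[OF fin eigenvalue_on_divide[OF _ \<mu>(1)]] t(1)
      by (simp add: norm_mult)
    finally show ?thesis .
  qed
  show ?thesis
  proof (cases "?q \<le> 0")
    case True
    then show ?thesis using sr_nonneg by linarith
  next
    case False
    then have "0 < ?q" by simp
    from dense_le_bounded[OF this below] show ?thesis .
  qed
qed

section \<open>Non-backtracking walks\<close>

lemma nb_walk_singleton [simp]: "nb_walk E [v]"
  by (simp add: nb_walk_def)

lemma nb_walk_snoc:
  assumes "W \<noteq> []"
  shows "nb_walk E (W @ [z]) \<longleftrightarrow>
           nb_walk E W \<and> E (last W) z \<and> (2 \<le> length W \<longrightarrow> z \<noteq> last (butlast W))"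
proof -
  obtain n where n: "length W = Suc n" using assms by (cases W) auto
  have "last W = W ! n" using n assms by (simp add: last_conv_nth)
  moreover have "last (butlast W) = W ! m" if "n = Suc m" for m
    using n that by (subst last_conv_nth) (auto simp: nth_butlast dest: arg_cong[where f = length])
  ultimately show ?thesis
    using n assms unfolding nb_walk_def
    by (cases n) (auto simp: nth_append less_Suc_eq imp_disjL all_conj_distrib)
qed

definition nb_walks :: "'a set \<Rightarrow> ('a \<Rightarrow> 'a \<Rightarrow> bool) \<Rightarrow> nat \<Rightarrow> 'a list set" where
  "nb_walks V E j = {xs. nb_walk E xs \<and> hd xs \<in> V \<and> length xs = Suc j}"

definition nb_extensions :: "'a set \<Rightarrow> ('a \<Rightarrow> 'a \<Rightarrow> bool) \<Rightarrow> 'a list \<Rightarrow> 'a set" where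
  "nb_extensions V E W =
     nbhd V E (last W) - (if 2 \<le> length W then {last (butlast W)} else {})"

lemma length_nb_walks: "W \<in> nb_walks V E j \<Longrightarrow> length W = Suc j"
  by (simp add: nb_walks_def)

lemma nb_walks_0: "nb_walks V E 0 = (\<lambda>v. [v]) ` V"
  unfolding nb_walks_def by (auto simp: length_Suc_conv)

lemma sum_nb_walks_0: "(\<Sum>x\<in>nb_walks V E 0. F x) = (\<Sum>v\<in>V. F [v])"
  unfolding nb_walks_0 by (subst sum.reindex) (auto simp: inj_on_def)

locale weighted_simple_graph =
  fixes V :: "'a set" and E :: "'a \<Rightarrow> 'a \<Rightarrow> bool" and w :: "'a \<Rightarrow> 'a \<Rightarrow> real"
  assumes graph: "weighted_graph V E w"
begin

lemma finite_V: "finite V"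
  using graph unfolding weighted_graph_def by blast

lemma edge_in_V: "E u v \<Longrightarrow> u \<in> V \<and> v \<in> V"
  using graph unfolding weighted_graph_def by blast

lemma edge_sym: "E u v \<Longrightarrow> E v u"
  using graph unfolding weighted_graph_def by blast

lemma weight_pos: "E u v \<Longrightarrow> w u v > 0"
  using graph unfolding weighted_graph_def by blast

lemma nb_walks_Suc:
  "nb_walks V E (Suc j) = (\<lambda>(W, z). W @ [z]) ` (SIGMA W:nb_walks V E j. nb_extensions V E W)"
proof (intro equalityI subsetI)
  fix xs assume "xs \<in> nb_walks V E (Suc j)"
  then have xs: "nb_walk E xs" "hd xs \<in> V" "length xs = Suc (Suc j)"
    unfolding nb_walks_def by auto
  obtain W z where eq: "xs = W @ [z]" using xs(3) by (cases xs rule: rev_cases) auto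
  then have W: "W \<noteq> []" using xs(3) by auto
  have "W \<in> nb_walks V E j" "z \<in> nb_extensions V E W"
    using xs eq W nb_walk_snoc[OF W, of E z] edge_in_V
    unfolding nb_walks_def nb_extensions_def nbhd_def by (auto simp: hd_append2)
  then show "xs \<in> (\<lambda>(W, z). W @ [z]) ` (SIGMA W:nb_walks V E j. nb_extensions V E W)"
    using eq by force
next
  fix xs assume "xs \<in> (\<lambda>(W, z). W @ [z]) ` (SIGMA W:nb_walks V E j. nb_extensions V E W)"
  then obtain W z where "xs = W @ [z]" "W \<in> nb_walks V E j" "z \<in> nb_extensions V E W"
    by auto
  moreover have "W \<noteq> []" using \<open>W \<in> nb_walks V E j\<close> by (auto simp: nb_walks_def)
  ultimately show "xs \<in> nb_walks V E (Suc j)"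
    using nb_walk_snoc[of W E z]
    unfolding nb_walks_def nb_extensions_def nbhd_def by (auto split: if_splits)
qed

lemma finite_nbhd: "finite (nbhd V E u)"
  using finite_V unfolding nbhd_def by simp

lemma finite_nb_extensions: "finite (nb_extensions V E W)"
  using finite_nbhd unfolding nb_extensions_def by simp

lemma finite_nb_walks: "finite (nb_walks V E j)"
  by (induction j) (simp_all add: nb_walks_0 nb_walks_Suc finite_V finite_nb_extensions)

lemma sum_nb_walks_Suc:
  "(\<Sum>x\<in>nb_walks V E (Suc j). F x) = (\<Sum>W\<in>nb_walks V E j. \<Sum>z\<in>nb_extensions V E W. F (W @ [z]))"
proof -
  have "inj_on (\<lambda>(W, z). W @ [z]) (SIGMA W:nb_walks V E j. nb_extensions V E W)"
    by (auto simp: inj_on_def)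
  then have "(\<Sum>x\<in>nb_walks V E (Suc j). F x)
      = (\<Sum>(W, z)\<in>(SIGMA W:nb_walks V E j. nb_extensions V E W). F (W @ [z]))"
    unfolding nb_walks_Suc by (subst sum.reindex) (auto intro: sum.cong)
  also have "\<dots> = (\<Sum>W\<in>nb_walks V E j. \<Sum>z\<in>nb_extensions V E W. F (W @ [z]))"
    by (rule sum.Sigma[symmetric]) (auto simp: finite_nb_walks finite_nb_extensions)
  finally show ?thesis .
qed

lemma last_nb_walk_in_V: "W \<in> nb_walks V E j \<Longrightarrow> last W \<in> V"
proof (induction j arbitrary: W)
  case (Suc j)
  then show ?case
    by (auto simp: nb_walks_Suc nb_extensions_def nbhd_def)
qed (auto simp: nb_walks_0)

lemma sum_nbhd_commute:
  "(\<Sum>u\<in>V. \<Sum>v\<in>nbhd V E u. h u v) = (\<Sum>v\<in>V. \<Sum>u\<in>nbhd V E v. h u v)"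
  unfolding nbhd_def
  by (subst sum.swap_restrict[OF finite_V finite_V]) (auto intro!: sum.cong intro: edge_sym)

lemma sum_nb_two_steps:
  "(\<Sum>u\<in>V. \<Sum>v\<in>nbhd V E u. \<Sum>z\<in>nbhd V E v - {u}. k v z)
     = (\<Sum>v\<in>V. \<Sum>z\<in>nbhd V E v. (real (deg V E v) - 1) * k v z)"
proof -
  have "(\<Sum>u\<in>N. \<Sum>z\<in>N - {u}. f z) = (real (card N) - 1) * (\<Sum>z\<in>N. f z)"
    if "finite N" for N and f :: "'a \<Rightarrow> real"
  proof -
    have "(\<Sum>u\<in>N. \<Sum>z\<in>N - {u}. f z) = (\<Sum>u\<in>N. (\<Sum>z\<in>N. f z) - f u)"
      using that by (intro sum.cong refl) (simp add: sum_diff1)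
    then show ?thesis by (simp add: sum_subtractf algebra_simps)
  qed
  then show ?thesis
    unfolding sum_nbhd_commute[of "\<lambda>u v. \<Sum>z\<in>nbhd V E v - {u}. k v z"]
    by (simp add: finite_nbhd deg_def sum_distrib_left)
qed

end

definition nb_weight :: "'a set \<Rightarrow> ('a \<Rightarrow> 'a \<Rightarrow> bool) \<Rightarrow> 'a list \<Rightarrow> real" where
  "nb_weight V E W = prod_list (map (\<lambda>x. 1 / (real (deg V E x) - 1)) (butlast (tl W)))"

lemma nb_weight_snoc:
  assumes "W \<noteq> []"
  shows "nb_weight V E (W @ [z]) =
           nb_weight V E W * (if 2 \<le> length W then 1 / (real (deg V E (last W)) - 1) else 1)"
proof (cases "2 \<le> length W")
  case True
  then have tl_W: "tl W = butlast (tl W) @ [last W]" by (cases W) auto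
  have "nb_weight V E (W @ [z]) = prod_list (map (\<lambda>x. 1 / (real (deg V E x) - 1)) (tl W))"
    using assms by (simp add: nb_weight_def tl_append2)
  also have "\<dots> = prod_list (map (\<lambda>x. 1 / (real (deg V E x) - 1)) (butlast (tl W) @ [last W]))"
    by (metis tl_W)
  finally show ?thesis using True by (simp add: nb_weight_def)
next
  case False
  then show ?thesis using assms by (cases W) (auto simp: nb_weight_def Suc_le_eq)
qed

locale min_degree_2_graph = weighted_simple_graph +
  assumes deg_ge_2: "\<forall>u\<in>V. 2 \<le> deg V E u"
begin

lemma deg_minus_1_pos: "u \<in> V \<Longrightarrow> real (deg V E u) - 1 > 0"
  using deg_ge_2 by force

lemma nb_weight_pos: "W \<in> nb_walks V E j \<Longrightarrow> nb_weight V E W > 0"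
proof (induction j arbitrary: W)
  case 0
  then show ?case by (auto simp: nb_walks_0 nb_weight_def)
next
  case (Suc j)
  then obtain W' z where W: "W = W' @ [z]" "W' \<in> nb_walks V E j" "z \<in> nb_extensions V E W'"
    by (auto simp: nb_walks_Suc)
  have "W' \<noteq> []" using length_nb_walks[OF W(2)] by auto
  then show ?case
    using Suc.IH[OF W(2)] W(1) deg_minus_1_pos[OF last_nb_walk_in_V[OF W(2)]]
    by (simp add: nb_weight_snoc)
qed

text \<open>Weighted by \<open>nb_weight\<close>, the last directed edge of the non-backtracking walks of any
  fixed length is equidistributed over the directed edges.\<close>

lemma sum_nb_walks_last_edge:
  "(\<Sum>W\<in>nb_walks V E (Suc j). nb_weight V E W * h (last (butlast W)) (last W))
     = (\<Sum>u\<in>V. \<Sum>v\<in>nbhd V E u. h u v)"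
proof (induction j arbitrary: h)
  case 0
  show ?case by (simp add: sum_nb_walks_Suc sum_nb_walks_0 nb_extensions_def nb_weight_def)
next
  case (Suc j)
  define h' where "h' u v = (\<Sum>z\<in>nbhd V E v - {u}. h v z / (real (deg V E v) - 1))" for u v
  have "(\<Sum>W\<in>nb_walks V E (Suc (Suc j)). nb_weight V E W * h (last (butlast W)) (last W))
      = (\<Sum>W\<in>nb_walks V E (Suc j). \<Sum>z\<in>nb_extensions V E W. nb_weight V E (W @ [z]) * h (last W) z)"
    by (simp add: sum_nb_walks_Suc)
  also have "\<dots> = (\<Sum>W\<in>nb_walks V E (Suc j). nb_weight V E W * h' (last (butlast W)) (last W))"
  proof (intro sum.cong refl)
    fix W assume "W \<in> nb_walks V E (Suc j)"
    then have "length W = Suc (Suc j)" by (rule length_nb_walks)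
    moreover from this have "W \<noteq> []" by auto
    ultimately show "(\<Sum>z\<in>nb_extensions V E W. nb_weight V E (W @ [z]) * h (last W) z)
        = nb_weight V E W * h' (last (butlast W)) (last W)"
      by (auto simp: nb_weight_snoc nb_extensions_def h'_def sum_distrib_left)
  qed
  also have "\<dots> = (\<Sum>v\<in>V. \<Sum>z\<in>nbhd V E v. (real (deg V E v) - 1) * (h v z / (real (deg V E v) - 1)))"
    by (simp only: Suc.IH) (unfold h'_def, rule sum_nb_two_steps)
  also have "\<dots> = (\<Sum>v\<in>V. \<Sum>z\<in>nbhd V E v. h v z)"
  proof (intro sum.cong refl)
    fix v z assume "v \<in> V"
    then show "(real (deg V E v) - 1) * (h v z / (real (deg V E v) - 1)) = h v z"
      using deg_minus_1_pos[of v] by simp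
  qed
  finally show ?case .
qed

end

definition walk_amplitude :: "'a set \<Rightarrow> ('a \<Rightarrow> 'a \<Rightarrow> bool) \<Rightarrow> ('a \<Rightarrow> real) \<Rightarrow> 'a list \<Rightarrow> real" where
  "walk_amplitude V E g W =
     (if length W = 1 then sqrt (g (hd W) * real (deg V E (hd W)))
      else sqrt (g (last W) * nb_weight V E W))"

definition amplitude_edge_sum ::
    "'a set \<Rightarrow> ('a \<Rightarrow> 'a \<Rightarrow> bool) \<Rightarrow> ('a \<Rightarrow> 'a \<Rightarrow> real) \<Rightarrow> ('a \<Rightarrow> real) \<Rightarrow> nat \<Rightarrow> real" where
  "amplitude_edge_sum V E w g j =
     (\<Sum>W\<in>nb_walks V E j. \<Sum>z\<in>nb_extensions V E W.
        walk_amplitude V E g W * w (last W) z * walk_amplitude V E g (W @ [z]))"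

definition nb_edge_sum :: "'a set \<Rightarrow> ('a \<Rightarrow> 'a \<Rightarrow> bool) \<Rightarrow> ('a \<Rightarrow> 'a \<Rightarrow> real) \<Rightarrow> ('a \<Rightarrow> real) \<Rightarrow> real" where
  "nb_edge_sum V E w g =
     (\<Sum>v1\<in>V. sqrt (real (deg V E v1) - 1) * (\<Sum>v2\<in>nbhd V E v1. w v1 v2 * sqrt (g v1 * g v2)))"

context min_degree_2_graph
begin

lemma sum_walk_amplitude_sq:
  assumes g_pos: "\<forall>u\<in>V. g u > 0"
  shows "(\<Sum>W\<in>nb_walks V E j. (walk_amplitude V E g W)\<^sup>2) = (\<Sum>u\<in>V. g u * real (deg V E u))"
proof (cases j)
  case 0
  then show ?thesis
    using g_pos by (auto simp: sum_nb_walks_0 walk_amplitude_def less_imp_le intro!: sum.cong)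
next
  case (Suc i)
  have "(\<Sum>W\<in>nb_walks V E j. (walk_amplitude V E g W)\<^sup>2)
      = (\<Sum>W\<in>nb_walks V E (Suc i). nb_weight V E W * g (last W))"
  proof (unfold Suc, intro sum.cong refl)
    fix W assume W: "W \<in> nb_walks V E (Suc i)"
    then show "(walk_amplitude V E g W)\<^sup>2 = nb_weight V E W * g (last W)"
      using length_nb_walks[OF W] last_nb_walk_in_V[OF W] nb_weight_pos[OF W] g_pos
      by (simp add: walk_amplitude_def less_imp_le)
  qed
  also have "\<dots> = (\<Sum>u\<in>V. \<Sum>v\<in>nbhd V E u. g v)"
    using sum_nb_walks_last_edge[where h = "\<lambda>u v. g v" and j = i] by simp
  also have "\<dots> = (\<Sum>u\<in>V. g u * real (deg V E u))"
    by (simp add: sum_nbhd_commute[of "\<lambda>u v. g v"] deg_def mult.commute)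
  finally show ?thesis .
qed

lemma walk_amplitude_mult_snoc:
  assumes g_pos: "\<forall>u\<in>V. g u > 0"
    and W: "W \<in> nb_walks V E (Suc j)" and z: "z \<in> nb_extensions V E W"
  shows "walk_amplitude V E g W * walk_amplitude V E g (W @ [z])
           = nb_weight V E W * (sqrt (g (last W) * g z) / sqrt (real (deg V E (last W)) - 1))"
proof -
  define p where "p = nb_weight V E W"
  define c where "c = real (deg V E (last W)) - 1"
  have len: "length W = Suc (Suc j)" "W \<noteq> []" using length_nb_walks[OF W] by auto
  have "p > 0" "c > 0"
    using nb_weight_pos[OF W] deg_minus_1_pos[OF last_nb_walk_in_V[OF W]] by (simp_all add: p_def c_def)
  moreover have "g (last W) > 0" "g z > 0"
    using g_pos last_nb_walk_in_V[OF W] z by (auto simp: nb_extensions_def nbhd_def)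
  moreover have "walk_amplitude V E g W = sqrt (g (last W) * p)"
    "walk_amplitude V E g (W @ [z]) = sqrt (g z * (p * (1 / c)))"
    using len by (auto simp: walk_amplitude_def p_def c_def nb_weight_snoc[of W])
  ultimately show ?thesis
    unfolding p_def[symmetric] c_def[symmetric]
    by (simp add: real_sqrt_mult real_sqrt_divide real_sqrt_mult_self mult_ac)
qed

lemma nb_edge_sum_le_amplitude_edge_sum_0:
  assumes g_pos: "\<forall>u\<in>V. g u > 0"
  shows "nb_edge_sum V E w g \<le> amplitude_edge_sum V E w g 0"
proof -
  have "sqrt (real (deg V E v) - 1) * (w v z * sqrt (g v * g z))
          \<le> sqrt (g v * real (deg V E v)) * w v z * sqrt (g z)"
    if "v \<in> V" "z \<in> nbhd V E v" for v z
  proof -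
    have "w v z > 0" "g v > 0" "g z > 0"
      using that g_pos weight_pos by (auto simp: nbhd_def)
    then have "sqrt (real (deg V E v) - 1) * (w v z * sqrt (g v * g z))
        \<le> sqrt (real (deg V E v)) * (w v z * sqrt (g v * g z))"
      by (intro mult_right_mono) auto
    then show ?thesis by (simp add: real_sqrt_mult mult_ac)
  qed
  then show ?thesis
    unfolding nb_edge_sum_def amplitude_edge_sum_def
    by (auto simp: sum_nb_walks_0 nb_extensions_def walk_amplitude_def nb_weight_def
        sum_distrib_left intro!: sum_mono)
qed

lemma amplitude_edge_sum_Suc:
  assumes g_pos: "\<forall>u\<in>V. g u > 0"
  shows "amplitude_edge_sum V E w g (Suc j) = nb_edge_sum V E w g"
proof -
  define k where "k v z = w v z * (sqrt (g v * g z) / sqrt (real (deg V E v) - 1))" for v z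
  have "amplitude_edge_sum V E w g (Suc j) = (\<Sum>W\<in>nb_walks V E (Suc j).
      nb_weight V E W * (\<Sum>z\<in>nbhd V E (last W) - {last (butlast W)}. k (last W) z))"
    unfolding amplitude_edge_sum_def
  proof (intro sum.cong refl)
    fix W assume W: "W \<in> nb_walks V E (Suc j)"
    have "(\<Sum>z\<in>nb_extensions V E W. walk_amplitude V E g W * w (last W) z
            * walk_amplitude V E g (W @ [z]))
        = (\<Sum>z\<in>nb_extensions V E W. nb_weight V E W * k (last W) z)"
      using walk_amplitude_mult_snoc[OF g_pos W] by (intro sum.cong refl) (simp add: k_def mult_ac)
    also have "\<dots> = nb_weight V E W * (\<Sum>z\<in>nbhd V E (last W) - {last (butlast W)}. k (last W) z)"
      using length_nb_walks[OF W] by (simp add: nb_extensions_def sum_distrib_left)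
    finally show "(\<Sum>z\<in>nb_extensions V E W. walk_amplitude V E g W * w (last W) z
            * walk_amplitude V E g (W @ [z])) = \<dots>" .
  qed
  also have "\<dots> = (\<Sum>u\<in>V. \<Sum>v\<in>nbhd V E u. \<Sum>z\<in>nbhd V E v - {u}. k v z)"
    by (rule sum_nb_walks_last_edge)
  also have "\<dots> = (\<Sum>v\<in>V. \<Sum>z\<in>nbhd V E v. (real (deg V E v) - 1) * k v z)"
    by (rule sum_nb_two_steps)
  also have "\<dots> = nb_edge_sum V E w g"
    unfolding nb_edge_sum_def sum_distrib_left
  proof (intro sum.cong refl)
    fix v z assume "v \<in> V"
    then have "(real (deg V E v) - 1) / sqrt (real (deg V E v) - 1) = sqrt (real (deg V E v) - 1)"
      using deg_minus_1_pos[of v] by (simp add: real_div_sqrt)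
    then show "(real (deg V E v) - 1) * k v z
        = sqrt (real (deg V E v) - 1) * (w v z * sqrt (g v * g z))"
      unfolding k_def by (metis mult.left_commute times_divide_eq_left times_divide_eq_right)
  qed
  finally show ?thesis .
qed

lemma nb_edge_sum_le_amplitude_edge_sum:
  assumes "\<forall>u\<in>V. g u > 0"
  shows "nb_edge_sum V E w g \<le> amplitude_edge_sum V E w g j"
  using assms nb_edge_sum_le_amplitude_edge_sum_0 amplitude_edge_sum_Suc
  by (cases j) auto

end

section \<open>The unraveled ball\<close>

definition child_weight :: "('a \<Rightarrow> 'a \<Rightarrow> real) \<Rightarrow> 'a list \<Rightarrow> 'a list \<Rightarrow> real" where
  "child_weight w x y = (if \<exists>z. y = x @ [z] then w (last x) (last y) else 0)"

lemma unr_adj_eq_child_weight: "unr_adj w x y = child_weight w x y + child_weight w y x"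
  by (auto simp: unr_adj_def child_weight_def)

lemma unr_adj_sym: "unr_adj w x y = unr_adj w y x"
  by (simp add: unr_adj_eq_child_weight)

lemma root_in_unr_verts: "[v] \<in> unr_verts E v r"
  by (simp add: unr_verts_def)

lemma butlast_in_unr_verts:
  assumes "y \<in> unr_verts E v r"
  shows "butlast y \<in> unr_verts E v r \<longleftrightarrow> 2 \<le> length y"
proof
  assume "butlast y \<in> unr_verts E v r"
  then have "butlast y \<noteq> []" by (simp add: unr_verts_def nb_walk_def)
  then show "2 \<le> length y" by (cases y rule: rev_cases) (auto simp: Suc_le_eq)
next
  assume "2 \<le> length y"
  then obtain x z where y: "y = x @ [z]" and x: "x \<noteq> []"
    by (cases y rule: rev_cases) (auto simp: Suc_le_eq)
  then show "butlast y \<in> unr_verts E v r"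
    using assms nb_walk_snoc[OF x, of E z] by (auto simp: unr_verts_def)
qed

lemma sum_child_weight_unr_verts:
  assumes fin: "finite (unr_verts E v r)" and y: "y \<in> unr_verts E v r"
  shows "(\<Sum>x\<in>unr_verts E v r. f x * child_weight w x y * f y)
           = (if 2 \<le> length y then f (butlast y) * w (last (butlast y)) (last y) * f y else 0)"
proof -
  have "y \<noteq> []" using y by (simp add: unr_verts_def nb_walk_def)
  then have "(\<exists>z. y = x @ [z]) \<longleftrightarrow> x = butlast y" for x
    by (metis append_butlast_last_id butlast_snoc)
  then have "(\<Sum>x\<in>unr_verts E v r. f x * child_weight w x y * f y)
      = (\<Sum>x\<in>unr_verts E v r. if x = butlast y then f x * w (last x) (last y) * f y else 0)"
    by (intro sum.cong refl) (simp add: child_weight_def)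
  also have "\<dots> = (if butlast y \<in> unr_verts E v r
                   then f (butlast y) * w (last (butlast y)) (last y) * f y else 0)"
    using fin by (simp add: sum.delta')
  finally show ?thesis using butlast_in_unr_verts[OF y] by simp
qed

context weighted_simple_graph
begin

lemma unr_verts_subset: "unr_verts E v r \<subseteq> (\<Union>j\<le>r. nb_walks V E j)" if "v \<in> V"
proof
  fix x assume "x \<in> unr_verts E v r"
  then have x: "nb_walk E x" "hd x = v" "length x \<le> Suc r" by (auto simp: unr_verts_def)
  then have "x \<in> nb_walks V E (length x - 1)"
    using that by (cases x) (auto simp: nb_walks_def nb_walk_def)
  then show "x \<in> (\<Union>j\<le>r. nb_walks V E j)" using x(3) by auto
qed

lemma finite_unr_verts: "v \<in> V \<Longrightarrow> finite (unr_verts E v r)"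
  using unr_verts_subset finite_nb_walks by (meson finite_UN_I finite_atMost finite_subset)

lemma sum_unr_verts_roots:
  "(\<Sum>v\<in>V. \<Sum>x\<in>unr_verts E v r. F x) = (\<Sum>j\<le>r. \<Sum>x\<in>nb_walks V E j. F x)"
proof -
  have "(\<Union>v\<in>V. unr_verts E v r) = (\<Union>j\<le>r. nb_walks V E j)"
    using unr_verts_subset by (fastforce simp: unr_verts_def nb_walks_def)
  moreover have "(\<Sum>v\<in>V. \<Sum>x\<in>unr_verts E v r. F x) = sum F (\<Union>v\<in>V. unr_verts E v r)"
    by (rule sum.UNION_disjoint[symmetric])
      (simp add: finite_V, simp add: finite_unr_verts, auto simp: unr_verts_def)
  moreover have "(\<Sum>j\<le>r. \<Sum>x\<in>nb_walks V E j. F x) = sum F (\<Union>j\<le>r. nb_walks V E j)"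
    by (rule sum.UNION_disjoint[symmetric])
      (simp, simp add: finite_nb_walks, auto simp: nb_walks_def)
  ultimately show ?thesis by simp
qed

lemma unr_quadratic_form:
  assumes "v \<in> V"
  shows "(\<Sum>x\<in>unr_verts E v r. \<Sum>y\<in>unr_verts E v r. f x * unr_adj w x y * f y)
           = 2 * (\<Sum>y\<in>unr_verts E v r. if 2 \<le> length y
                    then f (butlast y) * w (last (butlast y)) (last y) * f y else 0)"
proof -
  let ?T = "unr_verts E v r"
  have fin: "finite ?T" using finite_unr_verts[OF assms] .
  have "(\<Sum>x\<in>?T. \<Sum>y\<in>?T. f x * unr_adj w x y * f y)
      = (\<Sum>x\<in>?T. \<Sum>y\<in>?T. f x * child_weight w x y * f y)
        + (\<Sum>x\<in>?T. \<Sum>y\<in>?T. f y * child_weight w y x * f x)"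
    by (simp add: unr_adj_eq_child_weight algebra_simps sum.distrib)
  also have "(\<Sum>x\<in>?T. \<Sum>y\<in>?T. f x * child_weight w x y * f y)
      = (\<Sum>y\<in>?T. \<Sum>x\<in>?T. f x * child_weight w x y * f y)"
    by (rule sum.swap)
  finally show ?thesis
    using sum_child_weight_unr_verts[OF fin] by simp
qed

end

section \<open>Test vectors on the unraveled balls\<close>

lemma sin_path_eigenvector:
  fixes \<theta> :: real
  defines "s \<equiv> \<lambda>j::nat. sin (real (Suc j) * \<theta>)"
  shows "2 * cos \<theta> * (\<Sum>j\<le>m. (s j)\<^sup>2) = 2 * (\<Sum>j<m. s j * s (Suc j)) + s m * s (Suc m)"
proof (induction m)
  case 0
  show ?case by (simp add: s_def sin_double power2_eq_square)
next
  case (Suc m)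
  have rec: "s (Suc (Suc m)) + s m = 2 * cos \<theta> * s (Suc m)"
  proof -
    have "s (Suc (Suc m)) = sin (real (Suc (Suc m)) * \<theta> + \<theta>)"
      "s m = sin (real (Suc (Suc m)) * \<theta> - \<theta>)"
      by (simp_all add: s_def algebra_simps)
    then show ?thesis by (simp add: s_def sin_add sin_diff)
  qed
  have "2 * cos \<theta> * (\<Sum>j\<le>Suc m. (s j)\<^sup>2)
      = 2 * (\<Sum>j<m. s j * s (Suc j)) + s m * s (Suc m) + s (Suc m) * (2 * cos \<theta> * s (Suc m))"
    using Suc.IH by (simp add: power2_eq_square algebra_simps)
  also have "\<dots> = 2 * (\<Sum>j<Suc m. s j * s (Suc j)) + s (Suc m) * s (Suc (Suc m))"
    unfolding rec[symmetric] by (simp add: algebra_simps)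
  finally show ?case .
qed

lemma sin_path_eigenvector_pos:
  assumes "j \<le> r"
  shows "0 < sin (real (Suc j) * (pi / real (r + 2)))"
proof -
  have eq: "real (Suc j) * (pi / real (r + 2)) = pi * (real (Suc j) / real (r + 2))" by simp
  have "real (Suc j) / real (r + 2) < 1" using assms by simp
  then have "pi * (real (Suc j) / real (r + 2)) < pi * 1"
    by (intro mult_strict_left_mono) auto
  then show ?thesis unfolding eq by (intro sin_gt_zero) auto
qed

lemma ex_ge_ratio_if_sum_ge:
  fixes a b :: "'b \<Rightarrow> real"
  assumes "finite V" "V \<noteq> {}" "\<forall>v\<in>V. 0 < b v" "c * (\<Sum>v\<in>V. b v) \<le> (\<Sum>v\<in>V. a v)"
  shows "\<exists>v\<in>V. c \<le> a v / b v"
proof (rule ccontr)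
  assume "\<not> ?thesis"
  then have "\<forall>v\<in>V. a v < c * b v" using assms(3) by (auto simp: not_le divide_less_eq)
  then have "(\<Sum>v\<in>V. a v) < (\<Sum>v\<in>V. c * b v)" using assms(1,2) by (intro sum_strict_mono) auto
  then show False using assms(4) by (simp add: sum_distrib_left)
qed

definition ball_test_function ::
    "'a set \<Rightarrow> ('a \<Rightarrow> 'a \<Rightarrow> bool) \<Rightarrow> ('a \<Rightarrow> real) \<Rightarrow> (nat \<Rightarrow> real) \<Rightarrow> 'a list \<Rightarrow> real" where
  "ball_test_function V E g s x = s (length x - 1) * walk_amplitude V E g x"

context min_degree_2_graph
begin

lemma ball_test_norm_pos:
  assumes "v \<in> V" "\<forall>u\<in>V. g u > 0" "s 0 > 0"
  shows "0 < (\<Sum>x\<in>unr_verts E v r. (ball_test_function V E g s x)\<^sup>2)"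
proof -
  have "0 < g v" "2 \<le> deg V E v" using assms(1,2) deg_ge_2 by auto
  then have "0 < (ball_test_function V E g s [v])\<^sup>2"
    using assms(3) by (simp add: ball_test_function_def walk_amplitude_def)
  also have "\<dots> \<le> (\<Sum>x\<in>unr_verts E v r. (ball_test_function V E g s x)\<^sup>2)"
    using root_in_unr_verts finite_unr_verts[OF assms(1)] by (intro member_le_sum) auto
  finally show ?thesis .
qed

lemma sum_ball_test_norms:
  assumes "\<forall>u\<in>V. g u > 0"
  shows "(\<Sum>v\<in>V. \<Sum>x\<in>unr_verts E v r. (ball_test_function V E g s x)\<^sup>2)
           = (\<Sum>j\<le>r. (s j)\<^sup>2) * (\<Sum>u\<in>V. g u * real (deg V E u))"
proof -
  have "(\<Sum>x\<in>nb_walks V E j. (ball_test_function V E g s x)\<^sup>2)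
          = (s j)\<^sup>2 * (\<Sum>u\<in>V. g u * real (deg V E u))" for j
    using sum_walk_amplitude_sq[OF assms, of j, symmetric] length_nb_walks[of _ V E j]
    by (simp add: ball_test_function_def power_mult_distrib sum_distrib_left)
  then show ?thesis by (simp add: sum_unr_verts_roots sum_distrib_right)
qed

lemma sum_ball_test_quadratic_forms_ge:
  assumes g_pos: "\<forall>u\<in>V. g u > 0" and s_nonneg: "\<forall>j\<le>r. 0 \<le> s j"
  shows "2 * nb_edge_sum V E w g * (\<Sum>j<r. s j * s (Suc j))
           \<le> (\<Sum>v\<in>V. \<Sum>x\<in>unr_verts E v r. \<Sum>y\<in>unr_verts E v r.
                 ball_test_function V E g s x * unr_adj w x y * ball_test_function V E g s y)"
proof -
  define F where "F = ball_test_function V E g s"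
  define H where "H y = (if 2 \<le> length y then F (butlast y) * w (last (butlast y)) (last y) * F y
                          else 0)" for y
  have layer: "(\<Sum>y\<in>nb_walks V E (Suc j). H y) = s j * s (Suc j) * amplitude_edge_sum V E w g j"
    for j
    unfolding sum_nb_walks_Suc amplitude_edge_sum_def sum_distrib_left
    by (intro sum.cong refl)
      (auto simp: H_def F_def ball_test_function_def length_nb_walks mult_ac)
  have "2 * nb_edge_sum V E w g * (\<Sum>j<r. s j * s (Suc j))
      \<le> 2 * (\<Sum>j<r. s j * s (Suc j) * amplitude_edge_sum V E w g j)"
    using s_nonneg nb_edge_sum_le_amplitude_edge_sum[OF g_pos]
    by (auto simp: sum_distrib_left mult_ac intro!: sum_mono mult_left_mono)
  also have "\<dots> = 2 * (\<Sum>j\<le>r. \<Sum>y\<in>nb_walks V E j. H y)"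
    using layer by (simp add: sum.atMost_shift sum_nb_walks_0 H_def)
  also have "\<dots> = (\<Sum>v\<in>V. \<Sum>x\<in>unr_verts E v r. \<Sum>y\<in>unr_verts E v r. F x * unr_adj w x y * F y)"
    by (simp add: unr_quadratic_form sum_unr_verts_roots H_def sum_distrib_left)
  finally show ?thesis unfolding F_def .
qed

lemma ex_root_lambda1_ge:
  assumes g_pos: "\<forall>u\<in>V. g u > 0" and "V \<noteq> {}" and s_pos: "\<forall>j\<le>r. 0 < s j"
    and c: "c * ((\<Sum>j\<le>r. (s j)\<^sup>2) * (\<Sum>u\<in>V. g u * real (deg V E u)))
              \<le> 2 * nb_edge_sum V E w g * (\<Sum>j<r. s j * s (Suc j))"
  shows "\<exists>v\<in>V. c \<le> lambda1_unr E w v r"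
proof -
  define F where "F = ball_test_function V E g s"
  have norm_pos: "\<forall>v\<in>V. 0 < (\<Sum>x\<in>unr_verts E v r. (F x)\<^sup>2)"
    using ball_test_norm_pos g_pos s_pos by (simp add: F_def)
  have "c * (\<Sum>v\<in>V. \<Sum>x\<in>unr_verts E v r. (F x)\<^sup>2)
      = c * ((\<Sum>j\<le>r. (s j)\<^sup>2) * (\<Sum>u\<in>V. g u * real (deg V E u)))"
    unfolding F_def sum_ball_test_norms[OF g_pos] ..
  also have "\<dots> \<le> 2 * nb_edge_sum V E w g * (\<Sum>j<r. s j * s (Suc j))"
    by (rule c)
  also have "\<dots> \<le> (\<Sum>v\<in>V. \<Sum>x\<in>unr_verts E v r. \<Sum>y\<in>unr_verts E v r. F x * unr_adj w x y * F y)"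
    unfolding F_def using s_pos by (intro sum_ball_test_quadratic_forms_ge g_pos) auto
  finally obtain v where "v \<in> V" and v: "c \<le> (\<Sum>x\<in>unr_verts E v r. \<Sum>y\<in>unr_verts E v r.
      F x * unr_adj w x y * F y) / (\<Sum>x\<in>unr_verts E v r. (F x)\<^sup>2)"
    using ex_ge_ratio_if_sum_ge[OF finite_V \<open>V \<noteq> {}\<close> norm_pos] by blast
  have "\<dots> \<le> lambda1_unr E w v r"
    unfolding lambda1_unr_def
    using finite_unr_verts[OF \<open>v \<in> V\<close>] norm_pos \<open>v \<in> V\<close> unr_adj_sym
    by (intro rayleigh_quotient_le_spec_radius) auto
  with v have "c \<le> lambda1_unr E w v r" by linarith
  with \<open>v \<in> V\<close> show ?thesis by blast
qed

end

theorem theorem1p5: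
  fixes V :: "'a set" and E :: "'a \<Rightarrow> 'a \<Rightarrow> bool" and w :: "'a \<Rightarrow> 'a \<Rightarrow> real"
    and g :: "'a \<Rightarrow> real" and r :: nat
  assumes "weighted_graph V E w"
    and "connected_graph V E"
    and "\<forall>u\<in>V. deg V E u \<ge> 2"
    and "r \<ge> 1"
    and "\<forall>u\<in>V. g u > 0"
  shows "\<exists>v\<in>V. lambda1_unr E w v r \<ge>
           2 * (\<Sum>v1\<in>V. sqrt (real (deg V E v1) - 1) *
                   (\<Sum>v2\<in>nbhd V E v1. w v1 v2 * sqrt (g v1 * g v2)))
             / (\<Sum>u\<in>V. g u * real (deg V E u)) * cos (pi / real (r + 2))"
proof -
  interpret min_degree_2_graph V E w
    using assms(1,3) by unfold_locales
  define \<theta> where "\<theta> = pi / real (r + 2)"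
  define s where "s j = sin (real (Suc j) * \<theta>)" for j
  define D where "D = (\<Sum>u\<in>V. g u * real (deg V E u))"
  have "V \<noteq> {}" using assms(2) by (simp add: connected_graph_def)
  then have "D > 0" unfolding D_def using assms(3,5) finite_V by (intro sum_pos) force+
  have s_pos: "\<forall>j\<le>r. 0 < s j" using sin_path_eigenvector_pos by (simp add: s_def \<theta>_def)
  have "real (Suc (Suc r)) * \<theta> = pi" by (simp add: \<theta>_def)
  then have eigen: "2 * cos \<theta> * (\<Sum>j\<le>r. (s j)\<^sup>2) = 2 * (\<Sum>j<r. s j * s (Suc j))"
    using sin_path_eigenvector[of \<theta> r] by (simp add: s_def)
  have "2 * nb_edge_sum V E w g / D * cos \<theta> * ((\<Sum>j\<le>r. (s j)\<^sup>2) * D)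
      = nb_edge_sum V E w g * (2 * cos \<theta> * (\<Sum>j\<le>r. (s j)\<^sup>2))"
    using \<open>D > 0\<close> by (simp add: field_simps)
  also have "\<dots> = 2 * nb_edge_sum V E w g * (\<Sum>j<r. s j * s (Suc j))"
    by (simp add: eigen)
  finally have "2 * nb_edge_sum V E w g / D * cos \<theta> * ((\<Sum>j\<le>r. (s j)\<^sup>2) * D)
      \<le> 2 * nb_edge_sum V E w g * (\<Sum>j<r. s j * s (Suc j))" by simp
  then have "\<exists>v\<in>V. 2 * nb_edge_sum V E w g / D * cos \<theta> \<le> lambda1_unr E w v r"
    by (intro ex_root_lambda1_ge[OF assms(5) \<open>V \<noteq> {}\<close> s_pos]) (simp add: D_def)
  then show ?thesis by (simp only: nb_edge_sum_def D_def \<theta>_def)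
qed

end
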